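(* Let $X$ be a real normed space of dimension at most $2$, $\mathcal M=\{M_1,\dots,M_n\}\subset\mathcal P^f_{\mathrm{Cl,Conv}}(X)$, $\Sigma(\mathcal M)\neq\emptyset$ and $d=(d_1,\dots,d_n)\in\Omega(\mathcal M)$. Then for every $K\in\Sigma_d(\mathcal M)$ there exists $i$ with $d_i=\sup_{x\in M_i}|x\,K|$.
   Context: For a metric space $X$, $p\in X$, $A\subset X$: $|p\,A|=\inf_{a\in A}|p\,a|$ ($=\infty$ if $A=\emptyset$); for $0\le r<\infty$, $B_r(A)=\{p:|p\,A|\le r\}$. For nonempty $A,B$, $d_H(A,B)=\max\{\sup_{a\in A}|a\,B|,\sup_{b\in B}|b\,A|\}\in[0,\infty]$. $\mathcal P_{\mathrm{Cl}}(X)$ is the set of nonempty closed subsets of $X$ with $d_H$; a finiteness class is an equivalence class of $A\sim B\iff d_H(A,B)<\infty$. $\mathcal P^f_{\mathrm{Cl,Conv}}(X)$ denotes a fixed finiteness class of the space of nonempty closed convex subsets of $X$ (a family of nonempty closed convex sets pairwise at finite Hausdorff distance, maximal with this property); let $\mathcal P^f_{\mathrm{Cl}}(X)$ be the finiteness class of $\mathcal P_{\mathrm{Cl}}(X)$ containing it. For $\mathcal M=\{M_1,\dots,M_n\}$ in it, $S_{\mathcal M}(Y)=\sum_i d_H(Y,M_i)$; $\Sigma(\mathcal M)$ is the set of minimizers of $S_{\mathcal M}$ over $\mathcal P^f_{\mathrm{Cl}}(X)$; for $K\in\Sigma(\mathcal M)$, $d(K)=(d_H(K,M_1),\dots,d_H(K,M_n))$;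 $\Omega(\mathcal M)=\{d(K):K\in\Sigma(\mathcal M)\}$; for $d\in\Omega(\mathcal M)$, $\Sigma_d(\mathcal M)=\{K\in\Sigma(\mathcal M):d(K)=d\}$. *)

theory Defs
  imports "HOL-Analysis.Analysis"
begin

text \<open>Hausdorff distance with values in [0, infinity] (extended reals); for nonempty
  sets the point-to-set distance |p A| is the library's infdist p A.\<close>
definition dH :: "'a::metric_space set \<Rightarrow> 'a set \<Rightarrow> ereal" where
  "dH A B = max (SUP a\<in>A. ereal (infdist a B)) (SUP b\<in>B. ereal (infdist b A))"

definition ClassCl :: "'a::metric_space set \<Rightarrow> 'a set set" where
  "ClassCl C = {Y. Y \<noteq> {} \<and> closed Y \<and> dH Y C < \<infinity>}"

text \<open>The family M_1,...,M_n is given as a function M on indices 1..n.\<close>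
definition SM :: "(nat \<Rightarrow> 'a::metric_space set) \<Rightarrow> nat \<Rightarrow> 'a set \<Rightarrow> ereal" where
  "SM M n Y = (\<Sum>i\<in>{1..n}. dH Y (M i))"

definition Sigma_min :: "(nat \<Rightarrow> 'a::metric_space set) \<Rightarrow> nat \<Rightarrow> 'a set set" where
  "Sigma_min M n = {K \<in> ClassCl (M 1). \<forall>Y\<in>ClassCl (M 1). SM M n K \<le> SM M n Y}"

definition dvec :: "(nat \<Rightarrow> 'a::metric_space set) \<Rightarrow> nat \<Rightarrow> 'a set \<Rightarrow> nat \<Rightarrow> ereal" where
  "dvec M n K = (\<lambda>i. if i \<in> {1..n} then dH K (M i) else 0)"

definition Omega :: "(nat \<Rightarrow> 'a::metric_space set) \<Rightarrow> nat \<Rightarrow> (nat \<Rightarrow> ereal) set" where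
  "Omega M n = dvec M n ` Sigma_min M n"

definition Sigma_d :: "(nat \<Rightarrow> 'a::metric_space set) \<Rightarrow> nat \<Rightarrow> (nat \<Rightarrow> ereal) \<Rightarrow> 'a set set" where
  "Sigma_d M n d = {K \<in> Sigma_min M n. dvec M n K = d}"

end

theory Submission
  imports Defs
begin

text \<open>Suppose \<open>sup\<^sub>x\<^sub>\<in>\<^sub>M\<^sub>i |x K| < d\<^sub>i\<close> for every \<open>i\<close>. Given \<open>a \<in> K\<close>, choose for each \<open>j\<close>
  a point of \<open>K\<close> within bounded distance of \<open>a\<close> that is strictly closer than \<open>d\<^sub>j\<close> to \<open>M\<^sub>j\<close>
  (go from \<open>a\<close> to a nearby point of \<open>M\<^sub>j\<close> and back to \<open>K\<close>), and move \<open>a\<close> a small step towards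
  the barycentre of these points. Since the distance to a convex set is a convex function, every
  \<open>|\<cdot> M\<^sub>i|\<close> drops by a uniform amount on the moved set, while the step is too small to push
  \<open>sup\<^sub>x\<^sub>\<in>\<^sub>M\<^sub>i |x \<cdot>|\<close> up to \<open>d\<^sub>i\<close>. So the closure of the moved set is strictly closer to every
  \<open>M\<^sub>i\<close> than \<open>K\<close>, contradicting minimality. Nothing here uses the dimension of the space.\<close>

lemma infdist_less_iff:
  assumes "A \<noteq> {}"
  shows "infdist x A < r \<longleftrightarrow> (\<exists>a\<in>A. dist x a < r)"
  using assms by (simp add: infdist_notempty cINF_less_iff)

lemma convex_on_infdist:
  fixes S :: "'a::real_normed_vector set"
  assumes "convex S"
  shows "convex_on UNIV (\<lambda>x. infdist x S)"
proof (cases "S = {}")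
  case True
  then show ?thesis by (simp add: infdist_def convex_on_const)
next
  case False
  show ?thesis
  proof (rule convex_onI)
    fix t :: real and x y :: 'a
    assume t: "0 < t" "t < 1"
    show "infdist ((1 - t) *\<^sub>R x + t *\<^sub>R y) S \<le> (1 - t) * infdist x S + t * infdist y S"
    proof (rule field_le_epsilon)
      fix e :: real
      assume "0 < e"
      then obtain p q where p: "p \<in> S" "dist x p < infdist x S + e"
        and q: "q \<in> S" "dist y q < infdist y S + e"
        using infdist_less_iff[OF False] by (meson less_add_same_cancel1)
      have "(1 - t) *\<^sub>R p + t *\<^sub>R q \<in> S"
        using assms p(1) q(1) t by (simp add: convex_alt)
      then have "infdist ((1 - t) *\<^sub>R x + t *\<^sub>R y) S
          \<le> dist ((1 - t) *\<^sub>R x + t *\<^sub>R y) ((1 - t) *\<^sub>R p + t *\<^sub>R q)"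
        by (rule infdist_le)
      also have "\<dots> = norm ((1 - t) *\<^sub>R (x - p) + t *\<^sub>R (y - q))"
        by (simp add: dist_norm algebra_simps)
      also have "\<dots> \<le> (1 - t) * dist x p + t * dist y q"
        using t norm_triangle_ineq[of "(1 - t) *\<^sub>R (x - p)" "t *\<^sub>R (y - q)"]
        by (simp add: dist_norm)
      also have "\<dots> \<le> (1 - t) * (infdist x S + e) + t * (infdist y S + e)"
        using p q t by (intro add_mono mult_left_mono) auto
      finally show "infdist ((1 - t) *\<^sub>R x + t *\<^sub>R y) S \<le> (1 - t) * infdist x S + t * infdist y S + e"
        by (simp add: algebra_simps)
    qed
  qed simp
qed

lemma infdist_image_le:
  assumes "K \<noteq> {}" and "\<And>a. a \<in> K \<Longrightarrow> dist a (f a) \<le> r"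
  shows "infdist x (f ` K) \<le> infdist x K + r"
proof -
  have "infdist x (f ` K) - r \<le> dist x a" if "a \<in> K" for a
    using infdist_le[of "f a" "f ` K" x] dist_triangle[of x "f a" a] assms(2)[OF that] that
    by simp
  then have "infdist x (f ` K) - r \<le> infdist x K"
    unfolding infdist_notempty[OF assms(1)] by (rule cINF_greatest[OF assms(1)])
  then show ?thesis by simp
qed

lemma convex_on_average_le:
  fixes g :: "'a::real_vector \<Rightarrow> real"
  assumes "convex_on UNIV g" "finite I" "i \<in> I"
    and "\<And>j. j \<in> I \<Longrightarrow> g (p j) \<le> c" and "g (p i) \<le> c - e"
  shows "g (\<Sum>j\<in>I. (1 / card I) *\<^sub>R p j) \<le> c - e / card I"
proof -
  define N where "N = real (card I)"
  have N: "0 < N" using assms(2,3) by (auto simp: N_def card_gt_0_iff)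
  have "g (\<Sum>j\<in>I. (1 / N) *\<^sub>R p j) \<le> (\<Sum>j\<in>I. (1 / N) * g (p j))"
    using assms(1-3) N by (intro convex_on_sum) (auto simp: N_def)
  also have "\<dots> = (g (p i) + (\<Sum>j\<in>I - {i}. g (p j))) / N"
    using assms(2,3) by (simp add: sum_divide_distrib[symmetric] sum.remove)
  also have "\<dots> \<le> ((c - e) + (\<Sum>j\<in>I - {i}. c)) / N"
    using assms(4,5) N by (intro divide_right_mono add_mono sum_mono) auto
  also have "\<dots> = c - e / N"
  proof -
    have "(\<Sum>j\<in>I - {i}. c) = (N - 1) * c"
      using assms(2,3) N by (simp add: N_def card_Diff_singleton of_nat_diff)
    then show ?thesis using N by (simp add: field_simps)
  qed
  finally show ?thesis by (simp add: N_def)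
qed

lemma exists_point_towards_set:
  assumes "K \<noteq> {}" "M \<noteq> {}" "0 < e" and near: "\<And>x. x \<in> M \<Longrightarrow> infdist x K \<le> \<sigma>"
  obtains y where "y \<in> K" "infdist y M < \<sigma> + e" "dist a y < infdist a M + \<sigma> + 2 * e"
proof -
  obtain x where x: "x \<in> M" "dist a x < infdist a M + e"
    using infdist_less_iff[OF assms(2)] assms(3) by (meson less_add_same_cancel1)
  obtain y where y: "y \<in> K" "dist x y < infdist x K + e"
    using infdist_less_iff[OF assms(1)] assms(3) by (meson less_add_same_cancel1)
  have "infdist y M < \<sigma> + e"
    using infdist_le[OF x(1), of y] y(2) near[OF x(1)] by (simp add: dist_commute)
  moreover have "dist a y < infdist a M + \<sigma> + 2 * e"
    using dist_triangle[of a y x] x(2) y(2) near[OF x(1)] by simp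
  ultimately show ?thesis using y(1) that by blast
qed

context
  fixes K :: "'a::real_normed_vector set" and M :: "'i \<Rightarrow> 'a set"
    and I :: "'i set" and D \<sigma> :: "'i \<Rightarrow> real"
  assumes I: "finite I" "I \<noteq> {}" and K: "K \<noteq> {}"
    and M: "\<And>i. i \<in> I \<Longrightarrow> M i \<noteq> {}" "\<And>i. i \<in> I \<Longrightarrow> convex (M i)"
    and far: "\<And>i a. i \<in> I \<Longrightarrow> a \<in> K \<Longrightarrow> infdist a (M i) \<le> D i"
    and near: "\<And>i x. i \<in> I \<Longrightarrow> x \<in> M i \<Longrightarrow> infdist x K \<le> \<sigma> i"
    and gap: "\<And>i. i \<in> I \<Longrightarrow> \<sigma> i < D i"
begin

lemma exists_map_uniformly_closer:
  obtains c R \<delta> where "\<And>a. a \<in> K \<Longrightarrow> dist a (c a) \<le> R"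
    "\<And>i a. i \<in> I \<Longrightarrow> a \<in> K \<Longrightarrow> infdist (c a) (M i) \<le> D i - \<delta>" "0 < \<delta>"
proof -
  define e where "e = Min ((\<lambda>i. (D i - \<sigma> i) / 2) ` I)"
  define R where "R = Max ((\<lambda>i. D i + \<sigma> i + 2 * e) ` I)"
  have e: "0 < e" "\<And>i. i \<in> I \<Longrightarrow> \<sigma> i + e \<le> D i - e"
  proof -
    show "0 < e" using I gap by (auto simp: e_def)
    show "\<sigma> i + e \<le> D i - e" if "i \<in> I" for i
      using Min_le[OF finite_imageI[OF I(1)] imageI[OF that, of "\<lambda>i. (D i - \<sigma> i) / 2"]]
      by (simp add: e_def)
  qed
  have "\<exists>y\<in>K. infdist y (M j) \<le> D j - e \<and> dist a y \<le> R" if aK: "a \<in> K" and jI: "j \<in> I" for a j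
  proof -
    obtain y where y: "y \<in> K" "infdist y (M j) < \<sigma> j + e" "dist a y < infdist a (M j) + \<sigma> j + 2 * e"
      using exists_point_towards_set[OF K M(1) e(1) near] jI by metis
    have "D j + \<sigma> j + 2 * e \<le> R"
      unfolding R_def using I jI by (intro Max_ge) auto
    then show ?thesis using y e(2)[OF jI] far[OF jI aK] by force
  qed
  then obtain y where y: "\<And>a j. a \<in> K \<Longrightarrow> j \<in> I \<Longrightarrow>
      y a j \<in> K \<and> infdist (y a j) (M j) \<le> D j - e \<and> dist a (y a j) \<le> R"
    by metis
  define c where "c a = (\<Sum>j\<in>I. (1 / card I) *\<^sub>R y a j)" for a
  show ?thesis
  proof
    fix a assume "a \<in> K"
    obtain i where "i \<in> I" using I by blast
    show "dist a (c a) \<le> R"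
      using convex_on_average_le[OF convex_on_dist[OF convex_UNIV, of a] I(1) \<open>i \<in> I\<close>,
          where p="y a" and c=R and e=0] y[OF \<open>a \<in> K\<close>] \<open>i \<in> I\<close>
      by (simp add: c_def)
  next
    fix i a assume "i \<in> I" "a \<in> K"
    show "infdist (c a) (M i) \<le> D i - e / card I"
      unfolding c_def using y[OF \<open>a \<in> K\<close>] far[OF \<open>i \<in> I\<close>] \<open>i \<in> I\<close>
      by (intro convex_on_average_le[OF convex_on_infdist[OF M(2)] I(1)]) auto
  next
    show "0 < e / card I" using e(1) I by (simp add: card_gt_0_iff)
  qed
qed

lemma exists_closed_set_closer:
  obtains Y b where "Y \<noteq> {}" "closed Y" "\<And>i. i \<in> I \<Longrightarrow> b i < D i"
    "\<And>i y. i \<in> I \<Longrightarrow> y \<in> Y \<Longrightarrow> infdist y (M i) \<le> b i"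
    "\<And>i x. i \<in> I \<Longrightarrow> x \<in> M i \<Longrightarrow> infdist x Y \<le> b i"
proof -
  obtain c R \<delta> where cR: "\<And>a. a \<in> K \<Longrightarrow> dist a (c a) \<le> R"
    and cM: "\<And>i a. i \<in> I \<Longrightarrow> a \<in> K \<Longrightarrow> infdist (c a) (M i) \<le> D i - \<delta>" and \<delta>: "0 < \<delta>"
    using exists_map_uniformly_closer by blast
  have "0 \<le> R" using cR K by (meson ex_in_conv zero_le_dist order_trans)
  define \<theta> where "\<theta> = Min ((\<lambda>i. D i - \<sigma> i) ` I)"
  have \<theta>: "0 < \<theta>" "\<And>i. i \<in> I \<Longrightarrow> \<sigma> i + \<theta> \<le> D i"
  proof -
    show "0 < \<theta>" using I gap by (simp add: \<theta>_def)
    show "\<sigma> i + \<theta> \<le> D i" if "i \<in> I" for i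
      using Min_le[OF finite_imageI[OF I(1)] imageI[OF that, of "\<lambda>i. D i - \<sigma> i"]]
      by (simp add: \<theta>_def)
  qed
  define t where "t = \<theta> / (\<theta> + R)"
  have t: "0 < t" "t \<le> 1" "t * R < \<theta>"
  proof -
    have "0 < \<theta> + R" using \<theta>(1) \<open>0 \<le> R\<close> by linarith
    moreover have "\<theta> * R < \<theta> * (\<theta> + R)" using \<theta>(1) by (simp add: algebra_simps)
    ultimately show "0 < t" "t \<le> 1" "t * R < \<theta>"
      using \<theta>(1) \<open>0 \<le> R\<close> by (simp_all add: t_def field_simps)
  qed
  define f where "f a = (1 - t) *\<^sub>R a + t *\<^sub>R c a" for a
  define b where "b i = max (D i - t * \<delta>) (\<sigma> i + t * R)" for i
  show ?thesis
  proof
    show "closure (f ` K) \<noteq> {}" "closed (closure (f ` K))" using K by auto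
  next
    show "b i < D i" if "i \<in> I" for i
      using mult_pos_pos[OF t(1) \<delta>] t(3) \<theta>(2)[OF that] by (simp add: b_def)
  next
    fix i y assume i: "i \<in> I" and y: "y \<in> closure (f ` K)"
    show "infdist y (M i) \<le> b i"
    proof (rule continuous_le_on_closure[OF continuous_on_infdist[OF continuous_on_id] y])
      fix z assume "z \<in> f ` K"
      then obtain a where a: "a \<in> K" and z: "z = f a" by blast
      have "infdist z (M i) \<le> (1 - t) * infdist a (M i) + t * infdist (c a) (M i)"
        unfolding z f_def using t by (intro convex_onD[OF convex_on_infdist[OF M(2)[OF i]]]) auto
      also have "\<dots> \<le> (1 - t) * D i + t * (D i - \<delta>)"
        using far[OF i a] cM[OF i a] t by (intro add_mono mult_left_mono) auto
      finally show "infdist z (M i) \<le> b i" by (simp add: b_def algebra_simps)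
    qed
  next
    fix i x assume i: "i \<in> I" and x: "x \<in> M i"
    have step: "dist a (f a) \<le> t * R" if "a \<in> K" for a
    proof -
      have "dist a (f a) = t * dist a (c a)"
        using t(1) by (simp add: f_def dist_norm algebra_simps flip: scaleR_diff_right)
      then show ?thesis using cR[OF that] t(1) by simp
    qed
    have "infdist x (closure (f ` K)) \<le> infdist x (f ` K)"
      using K by (intro infdist_mono closure_subset) auto
    also have "\<dots> \<le> infdist x K + t * R"
      by (rule infdist_image_le[OF K step])
    finally show "infdist x (closure (f ` K)) \<le> b i"
      using near[OF i x] by (simp add: b_def)
  qed
qed

end

lemma infdist_le_dH: "a \<in> A \<Longrightarrow> ereal (infdist a B) \<le> dH A B"
  unfolding dH_def by (rule max.coboundedI1) (rule SUP_upper)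

lemma dH_le:
  assumes "\<And>a. a \<in> A \<Longrightarrow> infdist a B \<le> r" and "\<And>b. b \<in> B \<Longrightarrow> infdist b A \<le> r"
  shows "dH A B \<le> ereal r"
  unfolding dH_def using assms by (auto intro!: SUP_least)

lemma exists_closed_dH_less:
  fixes K :: "'a::real_normed_vector set" and M :: "'i \<Rightarrow> 'a set"
  assumes I: "finite I" "I \<noteq> {}" and K: "K \<noteq> {}"
    and M: "\<And>i. i \<in> I \<Longrightarrow> M i \<noteq> {}" "\<And>i. i \<in> I \<Longrightarrow> convex (M i)"
    and finite: "\<And>i. i \<in> I \<Longrightarrow> dH K (M i) < \<infinity>"
    and gap: "\<And>i. i \<in> I \<Longrightarrow> (SUP x\<in>M i. ereal (infdist x K)) < dH K (M i)"
  obtains Y where "Y \<noteq> {}" "closed Y" "\<And>i. i \<in> I \<Longrightarrow> dH Y (M i) < dH K (M i)"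
proof -
  obtain \<sigma> where \<sigma>: "\<And>i. i \<in> I \<Longrightarrow>
      (SUP x\<in>M i. ereal (infdist x K)) < ereal (\<sigma> i) \<and> ereal (\<sigma> i) < dH K (M i)"
    using ereal_dense2[OF gap] by metis
  define D where "D i = real_of_ereal (dH K (M i))" for i
  have D: "dH K (M i) = ereal (D i)" if "i \<in> I" for i
    using finite[OF that] \<sigma>[OF that] unfolding D_def by (cases "dH K (M i)") auto
  have far: "infdist a (M i) \<le> D i" if "i \<in> I" "a \<in> K" for i a
    using infdist_le_dH[OF that(2), of "M i"] D[OF that(1)] by simp
  have near: "infdist x K \<le> \<sigma> i" if "i \<in> I" "x \<in> M i" for i x
    using order.strict_trans1[OF SUP_upper[OF that(2)] conjunct1[OF \<sigma>[OF that(1)]]] by simp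
  have gap': "\<sigma> i < D i" if "i \<in> I" for i
    using \<sigma>[OF that] D[OF that] by simp
  obtain Y b where Y: "Y \<noteq> {}" "closed Y" and b: "\<And>i. i \<in> I \<Longrightarrow> b i < D i"
    and YM: "\<And>i y. i \<in> I \<Longrightarrow> y \<in> Y \<Longrightarrow> infdist y (M i) \<le> b i"
    and MY: "\<And>i x. i \<in> I \<Longrightarrow> x \<in> M i \<Longrightarrow> infdist x Y \<le> b i"
    using exists_closed_set_closer[where I=I and K=K and M=M and D=D and \<sigma>=\<sigma>, OF I K M far near gap']
    by blast
  show ?thesis
  proof (rule that[OF Y])
    show "dH Y (M i) < dH K (M i)" if "i \<in> I" for i
    proof -
      have "dH Y (M i) \<le> ereal (b i)" by (rule dH_le[OF YM[OF that] MY[OF that]])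
      also have "\<dots> < dH K (M i)" using b[OF that] D[OF that] by simp
      finally show ?thesis .
    qed
  qed
qed

lemma sum_ereal_strict_mono:
  fixes f g :: "'i \<Rightarrow> ereal"
  assumes "finite I" "I \<noteq> {}" "\<And>i. i \<in> I \<Longrightarrow> f i < g i"
  shows "sum f I < sum g I"
  using assms by (induction I rule: finite_ne_induct) (simp_all add: ereal_add_strict_mono2)

theorem mainTheorem17:
  fixes M :: "nat \<Rightarrow> 'a::real_normed_vector set" and n :: nat
    and d :: "nat \<Rightarrow> ereal" and K :: "'a set"
  assumes dimX: "\<exists>B::'a set. finite B \<and> card B \<le> 2 \<and> span B = UNIV"
    and n_pos: "n \<ge> 1"
    and M_cl: "\<forall>i\<in>{1..n}. M i \<noteq> {} \<and> closed (M i) \<and> convex (M i)"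
    and M_fin: "\<forall>i\<in>{1..n}. \<forall>j\<in>{1..n}. dH (M i) (M j) < \<infinity>"
    and Sigma_ne: "Sigma_min M n \<noteq> {}"
    and d_in: "d \<in> Omega M n"
    and K_in: "K \<in> Sigma_d M n d"
  shows "\<exists>i\<in>{1..n}. d i = (SUP x\<in>M i. ereal (infdist x K))"
proof (rule ccontr)
  assume not_attained: "\<not> (\<exists>i\<in>{1..n}. d i = (SUP x\<in>M i. ereal (infdist x K)))"
  have K: "K \<noteq> {}" "K \<in> ClassCl (M 1)" and d: "\<And>i. i \<in> {1..n} \<Longrightarrow> d i = dH K (M i)"
    and K_min: "\<And>Y. Y \<in> ClassCl (M 1) \<Longrightarrow> SM M n K \<le> SM M n Y"
    using K_in by (auto simp: Sigma_d_def Sigma_min_def ClassCl_def dvec_def)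
  have "SM M n K \<le> SM M n (M 1)"
    using M_cl M_fin n_pos by (intro K_min) (auto simp: ClassCl_def)
  also have "\<dots> < \<infinity>"
    using M_fin n_pos by (auto simp: SM_def sum_Pinfty less_top)
  finally have K_fin: "\<And>i. i \<in> {1..n} \<Longrightarrow> dH K (M i) < \<infinity>"
    by (auto simp: SM_def sum_Pinfty less_top)
  have gap: "(SUP x\<in>M i. ereal (infdist x K)) < dH K (M i)" if "i \<in> {1..n}" for i
    using not_attained d[OF that] that by (auto simp: dH_def order.strict_iff_order)
  obtain Y where Y: "Y \<noteq> {}" "closed Y" and closer: "\<And>i. i \<in> {1..n} \<Longrightarrow> dH Y (M i) < dH K (M i)"
    using exists_closed_dH_less[where I="{1..n}" and K=K and M=M, OF _ _ K(1) _ _ K_fin gap] M_cl n_pos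
    by auto
  have "Y \<in> ClassCl (M 1)"
    using Y closer[of 1] K_fin[of 1] n_pos by (auto simp: ClassCl_def)
  moreover have "SM M n Y < SM M n K"
    unfolding SM_def using closer n_pos by (intro sum_ereal_strict_mono) auto
  ultimately show False
    using K_min by (simp add: not_le[symmetric])
qed

end
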